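(* Let $\Omega$ be a smoothly bounded open subset of $\mathbb{C}$ and let $\Delta=\{(\sigma,\sigma):\sigma\in\partial\Omega\}$ be the diagonal in $\partial\Omega\times\partial\Omega$. Then $\Omega$ is convex if and only if $P_{\Omega}(\sigma,\tau)\geq 0$ for all $(\sigma,\tau)\in(\partial\Omega\times\partial\Omega)\setminus\Delta$.
   Context: An open set $\Omega\subseteq\mathbb{C}$ is smoothly bounded if it is bounded and $\partial\Omega$ is an embedded smooth submanifold of $\mathbb{C}$. Let $n_{\Omega}\colon\partial\Omega\to\mathbb{C}$ denote the outward unit normal vector of $\Omega$. The double-layer potential $P_{\Omega}\colon(\partial\Omega\times\mathbb{C})\setminus\Delta\to\mathbb{R}$ is $P_{\Omega}(\sigma,z)=\frac{1}{\pi}\operatorname{Re}\Big(\frac{n_{\Omega}(\sigma)}{\sigma-z}\Big)$ for $\sigma\in\partial\Omega$, $z\in\mathbb{C}$, $\sigma\neq z$. (The paper phrases the condition as "$P_{\Omega}$ is positive", positive meaning nonnegative.) *)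

theory Defs
  imports "HOL-Analysis.Analysis"
begin

fun iter_pd :: "complex list \<Rightarrow> (complex \<Rightarrow> real) \<Rightarrow> complex \<Rightarrow> real" where
  "iter_pd [] f = f"
| "iter_pd (v # vs) f = (\<lambda>x. deriv (\<lambda>t. iter_pd vs f (x + of_real t * v)) 0)"

definition Cinf_on :: "complex set \<Rightarrow> (complex \<Rightarrow> real) \<Rightarrow> bool" where
  "Cinf_on U f \<longleftrightarrow>
     (\<forall>vs. set vs \<subseteq> {1, \<i>}\<longrightarrow> continuous_on U (iter_pd vs f)) \<and>
     (\<forall>vs v. set vs \<subseteq> {1, \<i>}\<longrightarrow> v \<in> {1, \<i>}\<longrightarrow>
        (\<forall>x\<in>U. (\<lambda>t. iter_pd vs f (x + of_real t * v)) differentiable (at 0)))"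

definition grad :: "(complex \<Rightarrow> real) \<Rightarrow> complex \<Rightarrow> complex" where
  "grad f x = complex_of_real (iter_pd [1] f x) + \<i> * complex_of_real (iter_pd [\<i>] f x)"

definition local_defining_function ::
    "complex set \<Rightarrow> complex \<Rightarrow> complex set \<Rightarrow> (complex \<Rightarrow> real) \<Rightarrow> bool" where
  "local_defining_function \<Omega> p U \<rho> \<longleftrightarrow>
     open U \<and> p \<in> U \<and> Cinf_on U \<rho> \<and> (\<forall>z\<in>U. grad \<rho> z \<noteq> 0) \<and>
     \<Omega> \<inter> U = {z \<in> U. \<rho> z < 0}"

definition smoothly_bounded :: "complex set \<Rightarrow> bool" where
  "smoothly_bounded \<Omega> \<longleftrightarrow> open \<Omega> \<and> bounded \<Omega> \<and>
     (\<forall>p\<in>frontier \<Omega>. \<exists>U \<rho>. local_defining_function \<Omega> p U \<rho>)"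

definition outward_normal :: "complex set \<Rightarrow> complex \<Rightarrow> complex" where
  "outward_normal \<Omega> \<sigma> = (THE n. \<exists>U \<rho>. local_defining_function \<Omega> \<sigma> U \<rho> \<and>
       n = grad \<rho> \<sigma> / complex_of_real (cmod (grad \<rho> \<sigma>)))"

definition double_layer :: "complex set \<Rightarrow> complex \<Rightarrow> complex \<Rightarrow> real" where
  "double_layer \<Omega> \<sigma> z = (1 / pi) * Re (outward_normal \<Omega> \<sigma> / (\<sigma> - z))"

end

theory Submission
  imports Defs
begin

text \<open>
  Near a boundary point \<open>\<sigma>\<close> with defining function \<open>\<rho>\<close>, the ray \<open>\<sigma> + t v\<close> enters \<open>\<Omega>\<close>
  when \<open>\<nabla>\<rho>(\<sigma>) \<bullet> v < 0\<close> and leaves it when \<open>\<nabla>\<rho>(\<sigma>) \<bullet> v > 0\<close>. Hence the unit normal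
  does not depend on \<open>\<rho>\<close>, and for convex \<open>\<Omega>\<close> it is the outer normal of the supporting line
  at \<open>\<sigma>\<close>. Since \<open>P\<^sub>\<Omega>(\<sigma>, \<tau>)\<close> has the sign of \<open>n(\<sigma>) \<bullet> (\<sigma> - \<tau>)\<close>, positivity says that
  the boundary lies behind the tangent line at each of its points. A bounded set lies in
  every closed half-plane containing its boundary, so the open set \<open>\<Omega>\<close> lies in the open
  half-plane behind each tangent line; a segment joining two points of \<open>\<Omega>\<close> and leaving \<open>\<Omega>\<close>
  would meet the boundary at a point \<open>z\<close> while staying in the open half-plane at \<open>z\<close>.
\<close>

section \<open>Calculus for functions with continuous partial derivatives\<close>

lemma Cinf_on_continuous_on:
  assumes "Cinf_on U f" "set vs \<subseteq> {1, \<i>}"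
  shows "continuous_on U (iter_pd vs f)"
  using assms unfolding Cinf_on_def by blast

lemma Cinf_on_has_real_derivative:
  assumes "Cinf_on U f" "z \<in> U" "v \<in> {1, \<i>}"
  shows "((\<lambda>t. f (z + of_real t * v)) has_real_derivative iter_pd [v] f z) (at 0)"
proof -
  have "(\<lambda>t. iter_pd [] f (z + of_real t * v)) differentiable (at 0)"
    using assms unfolding Cinf_on_def by (metis empty_set empty_subsetI)
  then show ?thesis
    by (simp add: DERIV_deriv_iff_real_differentiable)
qed

lemma has_real_derivative_along_line_shift:
  assumes "((\<lambda>t. f (z + of_real t * v)) has_real_derivative D) (at 0)"
  shows "((\<lambda>s. f (z + of_real (s - s\<^sub>0) * v)) has_real_derivative D) (at s\<^sub>0)"
  using DERIV_shift[of "\<lambda>t. f (z + of_real t * v)" D s\<^sub>0 "- s\<^sub>0"] assms by simp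

lemma has_derivative_complex_partialsI:
  fixes f :: "complex \<Rightarrow> real"
  assumes U: "open U" "p \<in> U"
    and D1: "((\<lambda>t. f (p + of_real t)) has_real_derivative D1) (at 0)"
    and D2: "\<And>z. z \<in> U \<Longrightarrow> ((\<lambda>t. f (z + of_real t * \<i>)) has_real_derivative D2 z) (at 0)"
    and D2_cont: "isCont D2 p"
  shows "(f has_derivative (\<lambda>h. Re h * D1 + Im h * D2 p)) (at p)"
proof -
  obtain r where r: "r > 0" "ball p r \<subseteq> U"
    using U open_contains_ball by blast
  define X where "X = ball (Re p) (r/2)"
  define Y where "Y = ball (Im p) (r/2)"
  have XY_U: "Complex x y \<in> U" if "x \<in> X" "y \<in> Y" for x y
  proof -
    have "dist p (Complex x y) \<le> dist (Re p) x + dist (Im p) y"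
      using cmod_le[of "p - Complex x y"] by (simp add: dist_norm dist_real_def)
    also have "\<dots> < r" using that by (simp add: X_def Y_def)
    finally show ?thesis using r by auto
  qed
  have fx: "((\<lambda>x. f (Complex x (Im p))) has_derivative (*) D1) (at (Re p) within X)"
  proof -
    have "((\<lambda>s. f (p + of_real (s - Re p) * 1)) has_real_derivative D1) (at (Re p))"
      using has_real_derivative_along_line_shift[of f p 1] D1 by simp
    moreover have "(\<lambda>s. f (p + of_real (s - Re p) * 1)) = (\<lambda>x. f (Complex x (Im p)))"
      by (intro ext arg_cong[where f = f]) (simp add: complex_eq_iff)
    ultimately show ?thesis
      by (simp add: has_field_derivative_def has_derivative_at_withinI)
  qed
  have fy: "((\<lambda>y. f (Complex x y)) has_derivative blinfun_scaleR_left (D2 (Complex x y))) (at y within Y)"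
    if "x \<in> X" "y \<in> Y" for x y
  proof -
    have "((\<lambda>s. f (Complex x y + of_real (s - y) * \<i>)) has_real_derivative D2 (Complex x y)) (at y)"
      using has_real_derivative_along_line_shift D2[OF XY_U[OF that]] by blast
    moreover have "(\<lambda>s. f (Complex x y + of_real (s - y) * \<i>)) = (\<lambda>s. f (Complex x s))"
      by (intro ext arg_cong[where f = f]) (simp add: complex_eq_iff)
    moreover have "blinfun_apply (blinfun_scaleR_left (D2 (Complex x y))) = (*) (D2 (Complex x y))"
      by (simp add: fun_eq_iff)
    ultimately show ?thesis
      by (simp add: has_field_derivative_def has_derivative_at_withinI)
  qed
  have "isCont (\<lambda>q. Complex (fst q) (snd q)) (Re p, Im p)"
    unfolding Complex_eq by (intro continuous_intros)
  then have "isCont (\<lambda>q. D2 (Complex (fst q) (snd q))) (Re p, Im p)"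
    using isCont_o2 D2_cont by force
  then have "isCont (\<lambda>q. blinfun_scaleR_left (D2 (Complex (fst q) (snd q)))) (Re p, Im p)"
    by (intro continuous_intros)
  then have fy_cont:
    "continuous (at (Re p, Im p) within X \<times> Y) (\<lambda>(x, y). blinfun_scaleR_left (D2 (Complex x y)))"
    by (simp add: case_prod_beta' continuous_at_imp_continuous_within)
  have XY: "Im p \<in> Y" "convex Y" "open (X \<times> Y)" "(Re p, Im p) \<in> X \<times> Y"
    using r by (auto simp: X_def Y_def open_Times)
  have reim: "((\<lambda>z. (Re z, Im z)) has_derivative (\<lambda>h. (Re h, Im h))) (at p)"
    by (intro derivative_intros)
  have "((\<lambda>(x, y). f (Complex x y)) has_derivative (\<lambda>(s, t). D1 * s + t * D2 p)) (at (Re p, Im p))"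
    using has_derivative_partialsI[OF fx fy fy_cont XY(1,2)] at_within_open[OF XY(4,3)] by simp
  from diff_chain_at[OF reim this] show ?thesis
    by (simp add: o_def mult.commute)
qed

lemma Cinf_on_has_derivative:
  assumes "Cinf_on U f" "open U" "p \<in> U"
  shows "(f has_derivative (\<lambda>h. grad f p \<bullet> h)) (at p)"
proof -
  have "(f has_derivative (\<lambda>h. Re h * iter_pd [1] f p + Im h * iter_pd [\<i>] f p)) (at p)"
  proof (rule has_derivative_complex_partialsI[OF assms(2,3)])
    show "((\<lambda>t. f (p + of_real t)) has_real_derivative iter_pd [1] f p) (at 0)"
      using Cinf_on_has_real_derivative[OF assms(1,3), of 1] by simp
    show "((\<lambda>t. f (z + of_real t * \<i>)) has_real_derivative iter_pd [\<i>] f z) (at 0)" if "z \<in> U" for z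
      using Cinf_on_has_real_derivative[OF assms(1) that] by simp
    show "isCont (iter_pd [\<i>] f) p"
      using Cinf_on_continuous_on[OF assms(1), of "[\<i>]"] assms(2,3)
      by (simp add: continuous_on_eq_continuous_at)
  qed
  then show ?thesis
    by (simp add: grad_def inner_complex_def mult.commute)
qed

lemma Cinf_on_directional_derivative:
  assumes "Cinf_on U f" "open U" "p \<in> U"
  shows "((\<lambda>t. f (p + of_real t * v)) has_real_derivative grad f p \<bullet> v) (at 0)"
proof -
  have "((\<lambda>t. p + of_real t * v) has_derivative (\<lambda>t. of_real t * v)) (at 0)"
    by (intro derivative_eq_intros) auto
  moreover have "(f has_derivative (\<lambda>h. grad f p \<bullet> h)) (at (p + of_real 0 * v))"
    using Cinf_on_has_derivative[OF assms] by simp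
  ultimately have "((\<lambda>t. f (p + of_real t * v)) has_derivative (\<lambda>t. grad f p \<bullet> (of_real t * v))) (at 0)"
    by (rule has_derivative_compose)
  moreover have "(\<lambda>t. grad f p \<bullet> (of_real t * v)) = (*) (grad f p \<bullet> v)"
    by (simp add: fun_eq_iff inner_complex_def algebra_simps)
  ultimately show ?thesis
    by (simp add: has_field_derivative_def)
qed

section \<open>Defining functions and the outward normal\<close>

lemma local_defining_functionD:
  assumes "local_defining_function \<Omega> p U \<rho>"
  shows "open U" "p \<in> U" "Cinf_on U \<rho>" "\<And>z. z \<in> U \<Longrightarrow> grad \<rho> z \<noteq> 0"
    "\<And>z. z \<in> U \<Longrightarrow> z \<in> \<Omega> \<longleftrightarrow> \<rho> z < 0"
  using assms unfolding local_defining_function_def by blast+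

lemma smoothly_boundedD:
  assumes "smoothly_bounded \<Omega>"
  shows "open \<Omega>" "bounded \<Omega>" "\<And>p. p \<in> frontier \<Omega> \<Longrightarrow> \<exists>U \<rho>. local_defining_function \<Omega> p U \<rho>"
  using assms unfolding smoothly_bounded_def by blast+

lemma local_defining_function_zero:
  assumes L: "local_defining_function \<Omega> \<sigma> U \<rho>" and "open \<Omega>" "\<sigma> \<in> frontier \<Omega>"
  shows "\<rho> \<sigma> = 0"
proof -
  note F = local_defining_functionD[OF L]
  have "\<sigma> \<notin> \<Omega>"
    using assms frontier_disjoint_eq by blast
  then have "\<rho> \<sigma> \<ge> 0"
    using F(2,5) by force
  moreover have "\<rho> \<sigma> \<le> 0"
  proof -
    have "\<sigma> \<in> closure \<Omega>"
      using \<open>\<sigma> \<in> frontier \<Omega>\<close> by (simp add: frontier_def)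
    then obtain x where x: "\<And>n. x n \<in> \<Omega>" "x \<longlonglongrightarrow> \<sigma>"
      using closure_sequential by blast
    have "isCont \<rho> \<sigma>"
      using Cinf_on_continuous_on[OF F(3), of "[]"] F(1,2) by (simp add: continuous_on_eq_continuous_at)
    then have "(\<lambda>n. \<rho> (x n)) \<longlonglongrightarrow> \<rho> \<sigma>"
      using isCont_tendsto_compose x(2) by blast
    moreover have "eventually (\<lambda>n. x n \<in> U) sequentially"
      using topological_tendstoD[OF x(2) F(1,2)] .
    then have "eventually (\<lambda>n. \<rho> (x n) \<le> 0) sequentially"
      by eventually_elim (use x(1) F(5) in force)
    ultimately show ?thesis
      using tendsto_upperbound by fastforce
  qed
  ultimately show ?thesis by simp
qed

lemma local_defining_function_ray:
  assumes L: "local_defining_function \<Omega> \<sigma> U \<rho>" and "\<rho> \<sigma> = 0"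
  shows ray_eventually_in: "grad \<rho> \<sigma> \<bullet> v < 0 \<Longrightarrow> eventually (\<lambda>t. \<sigma> + of_real t * v \<in> \<Omega>) (at_right 0)"
    and ray_eventually_notin: "grad \<rho> \<sigma> \<bullet> v > 0 \<Longrightarrow> eventually (\<lambda>t. \<sigma> + of_real t * v \<notin> \<Omega>) (at_right 0)"
proof -
  note F = local_defining_functionD[OF L]
  have D: "((\<lambda>t. \<rho> (\<sigma> + of_real t * v)) has_real_derivative grad \<rho> \<sigma> \<bullet> v) (at 0)"
    using Cinf_on_directional_derivative[OF F(3,1,2)] .
  have "((\<lambda>t. \<sigma> + of_real t * v) \<longlongrightarrow> \<sigma>) (at_right 0)"
    by (auto intro!: tendsto_eq_intros)
  then have in_U: "eventually (\<lambda>t. \<sigma> + of_real t * v \<in> U) (at_right 0)"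
    using topological_tendstoD F(1,2) by blast
  show "eventually (\<lambda>t. \<sigma> + of_real t * v \<in> \<Omega>) (at_right 0)" if neg: "grad \<rho> \<sigma> \<bullet> v < 0"
  proof -
    obtain d where "d > 0" "\<And>h. 0 < h \<Longrightarrow> h < d \<Longrightarrow> \<rho> (\<sigma> + of_real h * v) < 0"
      using DERIV_neg_dec_right[OF D neg] \<open>\<rho> \<sigma> = 0\<close> by auto
    then have "eventually (\<lambda>t. \<rho> (\<sigma> + of_real t * v) < 0) (at_right 0)"
      unfolding eventually_at_right_field by blast
    with in_U show ?thesis
      by eventually_elim (use F(5) in blast)
  qed
  show "eventually (\<lambda>t. \<sigma> + of_real t * v \<notin> \<Omega>) (at_right 0)" if pos: "grad \<rho> \<sigma> \<bullet> v > 0"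
  proof -
    obtain d where "d > 0" "\<And>h. 0 < h \<Longrightarrow> h < d \<Longrightarrow> \<rho> (\<sigma> + of_real h * v) > 0"
      using DERIV_pos_inc_right[OF D pos] \<open>\<rho> \<sigma> = 0\<close> by auto
    then have "eventually (\<lambda>t. \<rho> (\<sigma> + of_real t * v) > 0) (at_right 0)"
      unfolding eventually_at_right_field by blast
    with in_U show ?thesis
      by eventually_elim (use F(5) in force)
  qed
qed

lemma sgn_eq_if_inner_neg_imp_nonpos:
  fixes a b :: "'a::real_inner"
  assumes "a \<noteq> 0" "b \<noteq> 0" and neg_imp_nonpos: "\<And>v. a \<bullet> v < 0 \<Longrightarrow> b \<bullet> v \<le> 0"
  shows "sgn a = sgn b"
proof (rule ccontr)
  define u where "u = sgn a"
  define w where "w = sgn b"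
  assume "sgn a \<noteq> sgn b"
  have unit: "u \<bullet> u = 1" "w \<bullet> w = 1"
    using assms(1,2) by (simp_all add: u_def w_def dot_square_norm norm_sgn)
  from \<open>sgn a \<noteq> sgn b\<close> have "0 < (norm (u - w))\<^sup>2"
    by (simp add: u_def w_def)
  also have "\<dots> = u \<bullet> u - 2 * (u \<bullet> w) + w \<bullet> w"
    by (simp add: power2_norm_eq_inner inner_diff_left inner_diff_right inner_commute)
  finally have uw: "u \<bullet> w < 1"
    using unit by simp
  have a_eq: "a = norm a *\<^sub>R u" and b_eq: "b = norm b *\<^sub>R w"
    using assms(1,2) by (simp_all add: u_def w_def sgn_div_norm)
  have "a \<bullet> (w - u) = norm a * (u \<bullet> w - 1)"
    by (subst a_eq) (simp add: inner_diff_right unit right_diff_distrib)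
  also have "\<dots> < 0"
    using assms(1) uw by (simp add: mult_pos_neg)
  finally have "b \<bullet> (w - u) \<le> 0"
    by (rule neg_imp_nonpos)
  moreover have "b \<bullet> (w - u) = norm b * (1 - w \<bullet> u)"
    by (subst b_eq) (simp add: inner_diff_right unit right_diff_distrib)
  moreover have "norm b * (1 - w \<bullet> u) > 0"
    using assms(2) uw by (simp add: inner_commute)
  ultimately show False
    by simp
qed

lemma outward_normal_eq_sgn_grad:
  assumes L: "local_defining_function \<Omega> \<sigma> U \<rho>" and "open \<Omega>" "\<sigma> \<in> frontier \<Omega>"
  shows "outward_normal \<Omega> \<sigma> = sgn (grad \<rho> \<sigma>)"
proof -
  txt \<open>A ray cannot enter \<open>\<Omega>\<close> according to one defining function and leave it according to another.\<close>
  have independent: "sgn (grad \<rho>' \<sigma>) = sgn (grad \<rho> \<sigma>)"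
    if L': "local_defining_function \<Omega> \<sigma> U' \<rho>'" for U' \<rho>'
  proof (rule sgn_eq_if_inner_neg_imp_nonpos)
    note F = local_defining_functionD[OF L] and F' = local_defining_functionD[OF L']
    show "grad \<rho>' \<sigma> \<noteq> 0" "grad \<rho> \<sigma> \<noteq> 0"
      using F(2,4) F'(2,4) by auto
    have zero: "\<rho> \<sigma> = 0" "\<rho>' \<sigma> = 0"
      using local_defining_function_zero[OF _ assms(2,3)] L L' by auto
    show "grad \<rho> \<sigma> \<bullet> v \<le> 0" if "grad \<rho>' \<sigma> \<bullet> v < 0" for v
    proof (rule ccontr)
      assume "\<not> grad \<rho> \<sigma> \<bullet> v \<le> 0"
      then have "eventually (\<lambda>t. \<sigma> + of_real t * v \<notin> \<Omega>) (at_right 0)"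
        using ray_eventually_notin[OF L zero(1)] by simp
      moreover have "eventually (\<lambda>t. \<sigma> + of_real t * v \<in> \<Omega>) (at_right 0)"
        using ray_eventually_in[OF L' zero(2) that] .
      ultimately have "eventually (\<lambda>t::real. False) (at_right 0)"
        by eventually_elim blast
      then show False
        by simp
    qed
  qed
  show ?thesis
    unfolding outward_normal_def
  proof (rule the_equality)
    show "\<exists>U' \<rho>'. local_defining_function \<Omega> \<sigma> U' \<rho>' \<and>
        sgn (grad \<rho> \<sigma>) = grad \<rho>' \<sigma> / complex_of_real (cmod (grad \<rho>' \<sigma>))"
      using L by (auto simp: sgn_eq)
    show "n = sgn (grad \<rho> \<sigma>)"
      if "\<exists>U' \<rho>'. local_defining_function \<Omega> \<sigma> U' \<rho>' \<and>
        n = grad \<rho>' \<sigma> / complex_of_real (cmod (grad \<rho>' \<sigma>))" for n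
      using that independent by (auto simp: sgn_eq)
  qed
qed

lemma outward_normal_nonzero:
  assumes "smoothly_bounded \<Omega>" "\<sigma> \<in> frontier \<Omega>"
  shows "outward_normal \<Omega> \<sigma> \<noteq> 0"
proof -
  obtain U \<rho> where L: "local_defining_function \<Omega> \<sigma> U \<rho>"
    using smoothly_boundedD(3)[OF assms] by blast
  then show ?thesis
    using outward_normal_eq_sgn_grad[OF L smoothly_boundedD(1)[OF assms(1)] assms(2)]
      local_defining_functionD(2,4)[OF L] by (simp add: sgn_zero_iff)
qed

lemma double_layer_nonneg_iff:
  assumes "\<sigma> \<noteq> z"
  shows "double_layer \<Omega> \<sigma> z \<ge> 0 \<longleftrightarrow> outward_normal \<Omega> \<sigma> \<bullet> (z - \<sigma>) \<le> 0"
proof -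
  have "double_layer \<Omega> \<sigma> z = (outward_normal \<Omega> \<sigma> \<bullet> (\<sigma> - z)) / ((cmod (\<sigma> - z))\<^sup>2 * pi)"
    unfolding double_layer_def Re_divide' inner_complex_def by simp
  moreover have "(cmod (\<sigma> - z))\<^sup>2 * pi > 0"
    using assms by simp
  ultimately show ?thesis
    by (simp add: zero_le_divide_iff inner_diff_right)
qed

section \<open>Convexity and the sign of the double-layer potential\<close>

lemma outward_normal_supports_convex:
  assumes "smoothly_bounded \<Omega>" "convex \<Omega>" "\<sigma> \<in> frontier \<Omega>" "y \<in> closure \<Omega>"
  shows "outward_normal \<Omega> \<sigma> \<bullet> (y - \<sigma>) \<le> 0"
proof -
  note S = smoothly_boundedD[OF assms(1)]
  obtain U \<rho> where L: "local_defining_function \<Omega> \<sigma> U \<rho>"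
    using S(3) assms(3) by blast
  have \<sigma>: "\<sigma> \<in> closure \<Omega>" "\<sigma> \<notin> rel_interior \<Omega>"
    using assms(3) S(1) frontier_disjoint_eq by (auto simp: frontier_def rel_interior_open)
  obtain c where "c \<noteq> 0" and "\<And>x. x \<in> closure \<Omega> \<Longrightarrow> c \<bullet> \<sigma> \<le> c \<bullet> x"
    by (rule supporting_hyperplane_relative_frontier[OF assms(2) \<sigma>]) blast
  then obtain a where "a \<noteq> 0" and supp: "\<And>x. x \<in> closure \<Omega> \<Longrightarrow> a \<bullet> x \<le> a \<bullet> \<sigma>"
    using that[of "- c"] by simp
  have "sgn (grad \<rho> \<sigma>) = sgn a"
  proof (rule sgn_eq_if_inner_neg_imp_nonpos)
    show "grad \<rho> \<sigma> \<noteq> 0"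
      using local_defining_functionD(2,4)[OF L] by blast
    show "a \<noteq> 0" by fact
    show "a \<bullet> v \<le> 0" if "grad \<rho> \<sigma> \<bullet> v < 0" for v
    proof -
      have "eventually (\<lambda>t. t > 0 \<and> \<sigma> + of_real t * v \<in> \<Omega>) (at_right 0)"
        using ray_eventually_in[OF L local_defining_function_zero[OF L S(1) assms(3)] that]
        by (simp add: eventually_conj_iff eventually_at_right_less)
      then obtain t where "t > 0" "\<sigma> + of_real t * v \<in> \<Omega>"
        using eventually_happens' trivial_limit_at_right_real by blast
      then have "a \<bullet> \<sigma> + t * (a \<bullet> v) \<le> a \<bullet> \<sigma>"
        using supp[of "\<sigma> + of_real t * v"] closure_subset
        by (auto simp: inner_complex_def algebra_simps)
      with \<open>t > 0\<close> show ?thesis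
        by (simp add: mult_le_0_iff)
    qed
  qed
  then have "outward_normal \<Omega> \<sigma> = sgn a"
    using outward_normal_eq_sgn_grad[OF L S(1) assms(3)] by simp
  moreover have "a \<bullet> (y - \<sigma>) \<le> 0"
    using supp[OF assms(4)] by (simp add: inner_diff_right)
  ultimately show ?thesis
    by (simp add: sgn_div_norm mult_nonneg_nonpos)
qed

lemma bounded_subset_halfspace_le_if_frontier:
  fixes S :: "'a::euclidean_space set"
  assumes "bounded S" "a \<noteq> 0" "frontier S \<subseteq> {x. a \<bullet> x \<le> b}"
  shows "S \<subseteq> {x. a \<bullet> x \<le> b}"
proof (cases "S = {}")
  case False
  txt \<open>The maximum of \<open>a \<bullet> x\<close> on the compact closure is attained on the frontier, since
    interior points lie in the open half-space below the maximum.\<close>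
  have "\<exists>x\<in>closure S. \<forall>y\<in>closure S. a \<bullet> y \<le> a \<bullet> x"
    using assms(1) False
    by (intro continuous_attains_sup) (simp_all add: continuous_on_inner continuous_on_id)
  then obtain x\<^sub>0 where x\<^sub>0: "x\<^sub>0 \<in> closure S" and max: "\<And>x. x \<in> closure S \<Longrightarrow> a \<bullet> x \<le> a \<bullet> x\<^sub>0"
    by blast
  have "interior S \<subseteq> interior {x. a \<bullet> x \<le> a \<bullet> x\<^sub>0}"
    using max closure_subset by (intro interior_mono) auto
  then have "x\<^sub>0 \<in> frontier S"
    using x\<^sub>0 assms(2) by (auto simp: frontier_def)
  then show ?thesis
    using assms(3) max closure_subset by fastforce
qed simp

lemma convex_if_frontier_in_halfspaces:
  fixes S :: "'a::euclidean_space set"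
  assumes "open S" "bounded S"
    and halfspace: "\<And>z. z \<in> frontier S \<Longrightarrow> \<exists>a. a \<noteq> 0 \<and> (\<forall>y\<in>frontier S. a \<bullet> y \<le> a \<bullet> z)"
  shows "convex S"
  unfolding convex_contains_segment
proof (intro ballI subsetI, rule ccontr)
  fix x y q
  assume "x \<in> S" "y \<in> S" "q \<in> closed_segment x y" "q \<notin> S"
  then obtain z where z: "z \<in> closed_segment x y" "z \<in> frontier S"
    using connected_Int_frontier[OF connected_segment, of x y S] by blast
  obtain a where "a \<noteq> 0" "frontier S \<subseteq> {w. a \<bullet> w \<le> a \<bullet> z}"
    using halfspace[OF z(2)] by blast
  then have "interior S \<subseteq> interior {w. a \<bullet> w \<le> a \<bullet> z}"
    using bounded_subset_halfspace_le_if_frontier[OF assms(2)] by (intro interior_mono) blast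
  then have "S \<subseteq> {w. a \<bullet> w < a \<bullet> z}"
    using \<open>a \<noteq> 0\<close> interior_open[OF assms(1)] by simp
  then have "closed_segment x y \<subseteq> {w. a \<bullet> w < a \<bullet> z}"
    using \<open>x \<in> S\<close> \<open>y \<in> S\<close> by (intro closed_segment_subset convex_halfspace_lt) auto
  then show False
    using z(1) by auto
qed

theorem proposition2p3:
  fixes \<Omega> :: "complex set"
  assumes "smoothly_bounded \<Omega>"
  shows "convex \<Omega> \<longleftrightarrow>
    (\<forall>\<sigma>\<in>frontier \<Omega>. \<forall>\<tau>\<in>frontier \<Omega>. \<sigma> \<noteq> \<tau> \<longrightarrow> double_layer \<Omega> \<sigma> \<tau> \<ge> 0)"
proof
  assume "convex \<Omega>"
  show "\<forall>\<sigma>\<in>frontier \<Omega>. \<forall>\<tau>\<in>frontier \<Omega>. \<sigma> \<noteq> \<tau> \<longrightarrow> double_layer \<Omega> \<sigma> \<tau> \<ge> 0"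
  proof (intro ballI impI)
    fix \<sigma> \<tau> assume "\<sigma> \<in> frontier \<Omega>" "\<tau> \<in> frontier \<Omega>" "\<sigma> \<noteq> \<tau>"
    then show "double_layer \<Omega> \<sigma> \<tau> \<ge> 0"
      using outward_normal_supports_convex[OF assms \<open>convex \<Omega>\<close>] double_layer_nonneg_iff
      by (simp add: frontier_def)
  qed
next
  assume nonneg: "\<forall>\<sigma>\<in>frontier \<Omega>. \<forall>\<tau>\<in>frontier \<Omega>. \<sigma> \<noteq> \<tau> \<longrightarrow> double_layer \<Omega> \<sigma> \<tau> \<ge> 0"
  show "convex \<Omega>"
  proof (rule convex_if_frontier_in_halfspaces[OF smoothly_boundedD(1,2)[OF assms]])
    fix z assume z: "z \<in> frontier \<Omega>"
    have "outward_normal \<Omega> z \<bullet> (\<tau> - z) \<le> 0" if "\<tau> \<in> frontier \<Omega>" for \<tau>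
      using nonneg z that double_layer_nonneg_iff[of z \<tau> \<Omega>] by (cases "\<tau> = z") auto
    then show "\<exists>a. a \<noteq> 0 \<and> (\<forall>\<tau>\<in>frontier \<Omega>. a \<bullet> \<tau> \<le> a \<bullet> z)"
      using outward_normal_nonzero[OF assms z] by (auto simp: inner_diff_right)
  qed
qed

end
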